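(* Let $n\ge1$ and let $R$ be a rook placement in $2\delta_{n-1}$. For $0\le i\le n-1$, let $R_i$ be the rook placement in $2\delta_i$ obtained by keeping only the top $i$ rows of $R$ (with their dots); so $R_0$ is empty and $R_{n-1}=R$. Then $(d(R_0),d(R_1),\dots,d(R_{n-1}))$ is an $n$-chain of Dyck shapes, i.e. $d(R_0)\sqsubset d(R_1)\sqsubset\cdots\sqsubset d(R_{n-1})$ with $d(R_{i})$ of length $2i+2$. Moreover, the map $R\mapsto (d(R_0),\dots,d(R_{n-1}))$ is a bijection between rook placements in $2\delta_{n-1}$ and $n$-chains of Dyck shapes.
   Context: The double staircase $2\delta_n$ is the Young diagram (French convention: rows drawn bottom to top, left-justified) with row lengths $2n,2n-2,\dots,2$ from bottom to top; its columns are numbered $1,\dots,2n$ from left to right; $2\delta_0$ is empty. Note that the top $i$ rows of $2\delta_{n-1}$ form a copy of $2\delta_i$. A rook placement in $2\delta_n$ is a set of dots in cells of $2\delta_n$ with exactly one dot per row and at most one per column. For such $R$, $d(R)$ is the word $w_1\cdots w_{2n+2}$ over $\{\nearrow,\searrow\}$ with $w_1=\nearrow$, $w_{2n+2}=\searrow$, and for $2\le i\le 2n+1$, $w_i=\nearrow$ iff column $i-1$ of $R$ contains a dot (so $d(R_0)=\nearrow\searrow$). A Dyck path of length $2m$ is a lattice path from $(0,0)$ to $(2m,0)$ with steps $\nearrow=(1,1)$, $\searrow=(1,-1)$ never going below the $x$-axis; write $P(x)$ for its height at abscissa $x$. A cell is a point $(a,b)\in\mathbb{Z}^2$ with $b\ge0$,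 $a+b$ even (viewed as the tilted square with vertices $(a,b),(a+1,b\pm1),(a+2,b)$). The Dyck shape of $P$ (length $2m$) is $S(P)=\{(a,b): b\ge0,\ a+b\text{ even},\ 0\le a\le 2m-2,\ b+1\le P(a+1)\}$. Cells are adjacent if they differ by $(\pm1,\pm1)$. A ribbon is a nonempty set of cells, connected for adjacency, containing no four cells $(a,b),(a+1,b+1),(a+1,b-1),(a+2,b)$. For Dyck paths $D$ of length $2m$ and $E$ of length $2m+2$, $D\sqsubset E$ means $S(D)\subseteq S(E)$ and $S(E)\setminus S(D)$ is a ribbon. An $n$-chain of Dyck shapes is a sequence $D_1\sqsubset D_2\sqsubset\cdots\sqsubset D_n$ of Dyck paths with $D_i$ of length $2i$. *)

theory Defs
  imports Main
begin

text \<open>Rows of the double staircase are indexed from the TOP: row k (1 \<le> k \<le> n) of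
  2delta_n has length 2k (it is the (n-k+1)-th row from the bottom).\<close>

definition cells :: "nat \<Rightarrow> (nat \<times> nat) set" where
  "cells n = {(k, c). 1 \<le> k \<and> k \<le> n \<and> 1 \<le> c \<and> c \<le> 2 * k}"

definition rook :: "nat \<Rightarrow> (nat \<times> nat) set \<Rightarrow> bool" where
  "rook n R \<longleftrightarrow> R \<subseteq> cells n
     \<and> (\<forall>k \<in> {1..n}. \<exists>!c. (k, c) \<in> R)
     \<and> (\<forall>k k' c. (k, c) \<in> R \<longrightarrow> (k', c) \<in> R \<longrightarrow> k = k')"

definition top_rows :: "nat \<Rightarrow> (nat \<times> nat) set \<Rightarrow> (nat \<times> nat) set" where
  "top_rows i R = {(k, c) \<in> R. k \<le> i}"

text \<open>Paths are lists of steps: True = up-step, False = down-step.\<close>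
definition dword :: "nat \<Rightarrow> (nat \<times> nat) set \<Rightarrow> bool list" where
  "dword n R = [True] @ map (\<lambda>c. \<exists>k. (k, c) \<in> R) [1..<2 * n + 1] @ [False]"

definition height :: "bool list \<Rightarrow> nat \<Rightarrow> int" where
  "height P x = sum_list (map (\<lambda>s. if s then 1 else -1) (take x P))"

definition dyck :: "bool list \<Rightarrow> bool" where
  "dyck P \<longleftrightarrow> even (length P) \<and> (\<forall>x \<le> length P. height P x \<ge> 0)
     \<and> height P (length P) = 0"

definition shape :: "bool list \<Rightarrow> (int \<times> int) set" where
  "shape P = {(a, b). 0 \<le> b \<and> even (a + b) \<and> 0 \<le> a \<and> a \<le> int (length P) - 2
     \<and> b + 1 \<le> height P (nat (a + 1))}"

definition adj :: "int \<times> int \<Rightarrow> int \<times> int \<Rightarrow> bool" where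
  "adj u v \<longleftrightarrow> \<bar>fst u - fst v\<bar> = 1 \<and> \<bar>snd u - snd v\<bar> = 1"

definition ribbon :: "(int \<times> int) set \<Rightarrow> bool" where
  "ribbon A \<longleftrightarrow> A \<noteq> {}
     \<and> (\<forall>x \<in> A. \<forall>y \<in> A. (\<lambda>u v. u \<in> A \<and> v \<in> A \<and> adj u v)\<^sup>*\<^sup>* x y)
     \<and> \<not> (\<exists>a b. (a, b) \<in> A \<and> (a + 1, b + 1) \<in> A \<and> (a + 1, b - 1) \<in> A \<and> (a + 2, b) \<in> A)"

definition covered :: "bool list \<Rightarrow> bool list \<Rightarrow> bool" where
  "covered D E \<longleftrightarrow> shape D \<subseteq> shape E \<and> ribbon (shape E - shape D)"

text \<open>An n-chain D_1,...,D_n is the list Ds with Ds ! (i-1) = D_i.\<close>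
definition dyck_chain :: "nat \<Rightarrow> bool list list \<Rightarrow> bool" where
  "dyck_chain n Ds \<longleftrightarrow> length Ds = n
     \<and> (\<forall>i < n. dyck (Ds ! i) \<and> length (Ds ! i) = 2 * i + 2)
     \<and> (\<forall>i. i + 1 < n \<longrightarrow> covered (Ds ! i) (Ds ! (i + 1)))"

definition rook_chain :: "nat \<Rightarrow> (nat \<times> nat) set \<Rightarrow> bool list list" where
  "rook_chain n R = map (\<lambda>i. dword i (top_rows i R)) [0..<n]"

end

theory Submission
  imports Defs
begin

text \<open>
  Write c for the column of the rook in row i + 1. Then d(R_(i+1)) arises from d(R_i) by
  appending two down steps and turning step c, a down step because column c is still free,
  into an up step. This raises the padded path by 2 to the right of c, so the new cells are
  the strip just above the path from c on: a ribbon. Conversely, if D is covered by E, shape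
  inclusion puts E weakly above the padded D; a gap of 4 would create a 2x2 box, and a gap
  that opens and closes again would disconnect the ribbon. So the gap is 0 up to some c and 2
  after it, which means E arises from D by exactly such a flip. The chain therefore records the
  column of every row, and every chain is realised by putting the rooks into the flipped columns.
\<close>

lemma height_0 [simp]: "height P 0 = 0"
  by (simp add: height_def)

lemma height_Suc:
  "x < length P \<Longrightarrow> height P (Suc x) = height P x + (if P ! x then 1 else -1)"
  by (simp add: height_def take_Suc_conv_app_nth)

lemma height_append: "x \<le> length xs \<Longrightarrow> height (xs @ ys) x = height xs x"
  by (simp add: height_def)

lemma even_height_add: "x \<le> length P \<Longrightarrow> even (height P x + int x)"
proof (induction x)
  case (Suc x)
  then show ?case using height_Suc[of x P] by auto
qed simp

lemma height_list_update_True: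
  assumes "c < length P" "\<not> P ! c"
  shows "height (P[c := True]) x = height P x + (if c < x then 2 else 0)"
proof -
  define L where "L = map (\<lambda>s. if s then 1 else -1 :: int) (take x P)"
  have upd: "height (P[c := True]) x = sum_list (L[c := 1])"
    by (simp add: height_def L_def take_update_swap map_update)
  show ?thesis
  proof (cases "c < x")
    case True
    then have "c < length L" "L ! c = -1" using assms by (auto simp: L_def)
    then have "sum_list (L[c := 1]) = sum_list L + 2"
      using id_take_nth_drop[of c L] upd_conv_take_nth_drop[of c L 1]
      by (smt (verit) sum_list_append sum_list.Cons)
    then show ?thesis using upd True by (simp add: height_def L_def)
  qed (simp add: upd L_def height_def)
qed

lemma list_update_True_if_height:
  assumes len: "length E = length P" and c: "c < length P"
    and h: "\<And>x. x \<le> length P \<Longrightarrow> height E x = height P x + (if c < x then 2 else 0)"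
  shows "\<not> P ! c \<and> E = P[c := True]"
proof -
  have step: "(if E ! j then 1 else -1) - (if P ! j then 1 else -1) = (if j = c then 2 else 0 :: int)"
    if "j < length P" for j
  proof -
    have "height E (Suc j) - height E j - (height P (Suc j) - height P j) = (if j = c then 2 else 0)"
      using h[of j] h[of "Suc j"] that by auto
    then show ?thesis using height_Suc[of j E] height_Suc[of j P] that len by simp
  qed
  show ?thesis
  proof
    show "\<not> P ! c" using step[OF c] by (auto split: if_splits)
    show "E = P[c := True]"
    proof (rule nth_equalityI)
      fix j assume "j < length E"
      then show "E ! j = P[c := True] ! j"
        using step[of j] len by (cases "j = c") (auto split: if_splits)
    qed (simp add: len)
  qed
qed

lemma dyck_height_nonneg: "dyck P \<Longrightarrow> x \<le> length P \<Longrightarrow> 0 \<le> height P x"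
  unfolding dyck_def by auto

lemma dyck_height_length: "dyck P \<Longrightarrow> height P (length P) = 0"
  unfolding dyck_def by auto

lemma dyck_starts_up: "dyck P \<Longrightarrow> P \<noteq> [] \<Longrightarrow> P ! 0"
  using dyck_height_nonneg[of P 1] height_Suc[of 0 P] by (cases P) (auto split: if_splits)

lemma dyck_up_down: "dyck [True, False]"
  unfolding dyck_def by (auto simp: height_def le_Suc_eq take_Cons')

lemma dyck_length_2: "dyck P \<Longrightarrow> length P = 2 \<Longrightarrow> P = [True, False]"
  using dyck_starts_up[of P] dyck_height_length[of P]
  by (auto simp: height_def length_Suc_conv numeral_2_eq_2 split: if_splits)

lemma height_padded:
  assumes "dyck D"
  shows "x \<le> length D \<Longrightarrow> height (D @ [False, False]) x = height D x"
    and "height (D @ [False, False]) (length D + 1) = -1"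
    and "height (D @ [False, False]) (length D + 2) = -2"
  using height_append[of _ D] dyck_height_length[OF assms]
    height_Suc[of "length D" "D @ [False, False]"] height_Suc[of "Suc (length D)" "D @ [False, False]"]
  by (auto simp: nth_append)

lemma height_padded_ge:
  assumes "dyck D" "x \<le> length D + 1"
  shows "-1 \<le> height (D @ [False, False]) x"
  using assms height_padded[OF assms(1)] dyck_height_nonneg[OF assms(1), of x]
  by (cases "x = length D + 1") auto

definition shape_of :: "(nat \<Rightarrow> int) \<Rightarrow> int \<Rightarrow> (int \<times> int) set" where
  "shape_of h L = {(a, b). 0 \<le> b \<and> even (a + b) \<and> 0 \<le> a \<and> a \<le> L \<and> b + 1 \<le> h (nat (a + 1))}"

lemma mem_shape_of:
  "(a, b) \<in> shape_of h L \<longleftrightarrow> 0 \<le> b \<and> even (a + b) \<and> 0 \<le> a \<and> a \<le> L \<and> b + 1 \<le> h (nat (a + 1))"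
  by (simp add: shape_of_def)

lemma shape_eq_shape_of: "shape P = shape_of (height P) (int (length P) - 2)"
  by (simp add: shape_def shape_of_def)

text \<open>Padding puts D on the same horizontal range as a path two steps longer.\<close>
lemma shape_eq_shape_of_padded:
  assumes "dyck D"
  shows "shape D = shape_of (height (D @ [False, False])) (int (length D))"
proof -
  have "(a, b) \<in> shape D \<longleftrightarrow> (a, b) \<in> shape_of (height (D @ [False, False])) (int (length D))"
    for a b
  proof (cases "a \<le> int (length D) - 2")
    case True
    then have "height (D @ [False, False]) (nat (a + 1)) = height D (nat (a + 1))"
      using height_padded(1)[OF assms] by simp
    then show ?thesis using True unfolding shape_eq_shape_of mem_shape_of by auto
  next
    case False
    have "a \<le> int (length D) \<Longrightarrow> height (D @ [False, False]) (nat (a + 1)) \<le> 0"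
    proof -
      assume "a \<le> int (length D)"
      then have "nat (a + 1) = length D \<or> nat (a + 1) = Suc (length D)" using False by linarith
      then show ?thesis using height_padded[OF assms] dyck_height_length[OF assms] by auto
    qed
    then show ?thesis using False unfolding shape_eq_shape_of mem_shape_of by auto
  qed
  then show ?thesis by auto
qed

lemma rtranclp_chain:
  assumes step: "\<And>a. c \<le> a \<Longrightarrow> a < N \<Longrightarrow> r (f a) (f (Suc a))"
    and "c \<le> a" "a \<le> a'" "a' \<le> N"
  shows "r\<^sup>*\<^sup>* (f a) (f a')"
  using assms(3,4)
proof (induction a' rule: dec_induct)
  case (step k)
  then have "r\<^sup>*\<^sup>* (f a) (f k)" "r (f k) (f (Suc k))" using assms(1,2) by simp_all
  then show ?case by (rule rtranclp.rtrancl_into_rtrancl)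
qed simp

lemma ribbon_graph:
  fixes h :: "nat \<Rightarrow> int"
  assumes "c \<le> N" and steps: "\<And>a. c \<le> a \<Longrightarrow> a < N \<Longrightarrow> \<bar>h (Suc a) - h a\<bar> = 1"
  shows "ribbon ((\<lambda>a. (int a, h a)) ` {c..N})"
proof -
  define A where "A = (\<lambda>a. (int a, h a)) ` {c..N}"
  define r where "r u v \<longleftrightarrow> u \<in> A \<and> v \<in> A \<and> adj u v" for u v
  have "symp r" unfolding r_def adj_def by (auto intro: sympI simp: abs_minus_commute)
  have "r (int a, h a) (int (Suc a), h (Suc a))" if "c \<le> a" "a < N" for a
  proof -
    have "(int a, h a) \<in> A" "(int (Suc a), h (Suc a)) \<in> A"
      using that unfolding A_def by (auto simp del: of_nat_Suc)
    then show ?thesis using steps[OF that] unfolding r_def adj_def by (simp add: abs_minus_commute)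
  qed
  then have chain: "r\<^sup>*\<^sup>* (int a, h a) (int a', h a')" if "c \<le> a" "a \<le> a'" "a' \<le> N" for a a'
    using rtranclp_chain[of c N r "\<lambda>a. (int a, h a)"] that by simp
  have "r\<^sup>*\<^sup>* x y" if xy: "x \<in> A" "y \<in> A" for x y
  proof -
    obtain a a' where "a \<in> {c..N}" "a' \<in> {c..N}" "x = (int a, h a)" "y = (int a', h a')"
      using xy unfolding A_def by blast
    then show ?thesis
      using chain[of a a'] chain[of a' a] sympD[OF symp_rtranclp[OF \<open>symp r\<close>]]
      by (cases "a \<le> a'") auto
  qed
  moreover have "\<not> ((a + 1, b + 1) \<in> A \<and> (a + 1, b - 1) \<in> A)" for a b
    unfolding A_def by auto
  moreover have "A \<noteq> {}" using assms(1) unfolding A_def by simp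
  ultimately show ?thesis
    unfolding ribbon_def A_def[symmetric] r_def by auto
qed

abbreviation grow :: "bool list \<Rightarrow> nat \<Rightarrow> bool list" where
  "grow D c \<equiv> (D @ [False, False])[c := True]"

lemma height_grow:
  assumes "c \<le> length D" "\<not> (D @ [False, False]) ! c"
  shows "height (grow D c) x = height (D @ [False, False]) x + (if c < x then 2 else 0)"
  using assms height_list_update_True[of c "D @ [False, False]"] by simp

lemma dyck_grow:
  assumes D: "dyck D" and c: "c \<le> length D" "\<not> (D @ [False, False]) ! c"
  shows "dyck (grow D c)"
  unfolding dyck_def
proof (intro conjI allI impI)
  show "even (length (grow D c))" using D by (simp add: dyck_def)
  show "0 \<le> height (grow D c) x" if "x \<le> length (grow D c)" for x
  proof (cases "c < x")
    case True
    then have "-2 \<le> height (D @ [False, False]) x"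
      using height_padded_ge[OF D, of x] height_padded(3)[OF D] that
      by (cases "x = length D + 2") auto
    then show ?thesis using height_grow[OF c] True by simp
  next
    case False
    then show ?thesis
      using height_grow[OF c] height_padded(1)[OF D] dyck_height_nonneg[OF D, of x] c by simp
  qed
  show "height (grow D c) (length (grow D c)) = 0"
    using height_grow[OF c] height_padded(3)[OF D] c by simp
qed

lemma shape_subset_shape_grow:
  assumes D: "dyck D" and c: "c \<le> length D" "\<not> (D @ [False, False]) ! c"
  shows "shape D \<subseteq> shape (grow D c)"
  using height_grow[OF c] c
  unfolding shape_eq_shape_of_padded[OF D] shape_eq_shape_of[of "grow D c"] shape_of_def
  by fastforce

lemma shape_grow_diff:
  assumes D: "dyck D" and c: "c \<le> length D" "\<not> (D @ [False, False]) ! c"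
  defines "h \<equiv> height (D @ [False, False])"
  shows "shape (grow D c) - shape D = (\<lambda>a. (int a, h (Suc a) + 1)) ` {c..length D}"
proof -
  have hE: "height (grow D c) x = h x + (if c < x then 2 else 0)" for x
    using height_grow[OF c] h_def by simp
  have even_h: "x \<le> length D + 2 \<Longrightarrow> even (h x + int x)" for x
    using even_height_add[of x "D @ [False, False]"] h_def by simp
  have mem: "(a, b) \<in> shape (grow D c) - shape D \<longleftrightarrow> 0 \<le> b \<and> even (a + b) \<and> 0 \<le> a
      \<and> a \<le> int (length D) \<and> b + 1 \<le> height (grow D c) (nat (a + 1)) \<and> h (nat (a + 1)) < b + 1" for a b
    using shape_eq_shape_of[of "grow D c"] shape_eq_shape_of_padded[OF D] c h_def
    by (auto simp: mem_shape_of)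
  show ?thesis
  proof (intro set_eqI iffI)
    fix p assume p: "p \<in> shape (grow D c) - shape D"
    obtain a b where ab: "p = (a, b)" by (cases p)
    define k where "k = nat a"
    have kb: "p = (int k, b)" "nat (int k + 1) = Suc k" using p mem[of a b] ab k_def by auto
    have "c \<le> k" using p mem[of "int k" b] hE[of "Suc k"] kb by (cases "c < Suc k") auto
    moreover have "b = h (Suc k) + 1"
    proof -
      have "h (Suc k) < b + 1" "b + 1 \<le> h (Suc k) + 2"
        using p mem[of "int k" b] hE[of "Suc k"] kb \<open>c \<le> k\<close> by auto
      moreover have "even (h (Suc k) + int (Suc k))" "even (int k + b)"
        using even_h[of "Suc k"] p mem[of "int k" b] kb by auto
      ultimately show ?thesis by presburger
    qed
    ultimately show "p \<in> (\<lambda>a. (int a, h (Suc a) + 1)) ` {c..length D}"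
      using p mem[of "int k" b] kb by auto
  next
    fix p assume "p \<in> (\<lambda>a. (int a, h (Suc a) + 1)) ` {c..length D}"
    then obtain k where k: "c \<le> k" "k \<le> length D" "p = (int k, h (Suc k) + 1)" by auto
    moreover have "-1 \<le> h (Suc k)" using height_padded_ge[OF D, of "Suc k"] k h_def by simp
    moreover have "even (h (Suc k) + int (Suc k))" using even_h[of "Suc k"] k by simp
    moreover have "nat (int k + 1) = Suc k" by simp
    ultimately show "p \<in> shape (grow D c) - shape D"
      using mem[of "int k" "h (Suc k) + 1"] hE[of "Suc k"] by auto
  qed
qed

lemma covered_grow:
  assumes D: "dyck D" and c: "c \<le> length D" "\<not> (D @ [False, False]) ! c"
  shows "covered D (grow D c)"
proof -
  have "ribbon ((\<lambda>a. (int a, height (D @ [False, False]) (Suc a) + 1)) ` {c..length D})"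
  proof (rule ribbon_graph[OF c(1)])
    fix a assume "a < length D"
    then show "\<bar>height (D @ [False, False]) (Suc (Suc a)) + 1 - (height (D @ [False, False]) (Suc a) + 1)\<bar> = 1"
      using height_Suc[of "Suc a" "D @ [False, False]"] by auto
  qed
  then show ?thesis
    unfolding covered_def using shape_subset_shape_grow[OF D c] shape_grow_diff[OF D c] by simp
qed

lemma adj_path_stays_left:
  assumes "(\<lambda>u v. u \<in> A \<and> v \<in> A \<and> adj u v)\<^sup>*\<^sup>* p q" "fst p < k" "\<And>b. (k, b) \<notin> A"
  shows "fst q < k"
  using assms(1,2)
proof (induction rule: rtranclp_induct)
  case (step y z)
  then have "\<bar>fst y - fst z\<bar> = 1" "fst z \<noteq> k" using assms(3) unfolding adj_def by (auto, metis prod.collapse)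
  then show ?case using step by auto
qed

context
  fixes D E :: "bool list" and m :: nat
  assumes dyck_D: "dyck D" and length_D: "length D = 2 * m" and m_pos: "1 \<le> m"
    and dyck_E: "dyck E" and length_E: "length E = 2 * m + 2"
    and D_covered_E: "covered D E"
begin

abbreviation hD :: "nat \<Rightarrow> int" where
  "hD \<equiv> height (D @ [False, False])"

abbreviation gap :: "nat \<Rightarrow> int" where
  "gap x \<equiv> height E x - hD x"

lemma mem_shape_diff:
  "(a, b) \<in> shape E - shape D \<longleftrightarrow> 0 \<le> b \<and> even (a + b) \<and> 0 \<le> a \<and> a \<le> 2 * int m
     \<and> b + 1 \<le> height E (nat (a + 1)) \<and> hD (nat (a + 1)) < b + 1"
  using shape_eq_shape_of[of E] shape_eq_shape_of_padded[OF dyck_D] length_D length_E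
  by (auto simp: mem_shape_of)

lemma even_gap: "x \<le> 2 * m + 2 \<Longrightarrow> even (gap x)"
  using even_height_add[of x E] even_height_add[of x "D @ [False, False]"] length_D length_E
  by simp

lemma gap_1: "gap 1 = 0"
proof -
  have "D \<noteq> []" "E \<noteq> []" using length_D length_E m_pos by auto
  then show ?thesis
    using dyck_starts_up[OF dyck_D] dyck_starts_up[OF dyck_E] height_Suc[of 0 E]
      height_Suc[of 0 "D @ [False, False]"] length_D length_E m_pos
    by (auto simp: nth_append)
qed

lemma gap_end: "gap (2 * m + 1) = 2" "gap (2 * m + 2) = 2"
proof -
  have "height E (2 * m + 2) = 0" using dyck_height_length[OF dyck_E] length_E by simp
  moreover have "height E (2 * m + 1) = 1"
    using height_Suc[of "2 * m + 1" E] dyck_height_nonneg[OF dyck_E, of "2 * m + 1"] calculation length_E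
    by (auto split: if_splits)
  ultimately show "gap (2 * m + 1) = 2" "gap (2 * m + 2) = 2"
    using height_padded(2,3)[OF dyck_D] length_D by auto
qed

lemma hD_le_height:
  assumes x: "1 \<le> x" "x \<le> 2 * m + 1"
  shows "hD x \<le> height E x"
proof (cases "1 \<le> hD x")
  case True
  have "(int x - 1, hD x - 1) \<in> shape D"
    using shape_eq_shape_of_padded[OF dyck_D] True x even_height_add[of x "D @ [False, False]"] length_D
    by (auto simp: mem_shape_of nat_diff_distrib)
  then have "(int x - 1, hD x - 1) \<in> shape E" using D_covered_E unfolding covered_def by blast
  then show ?thesis using x by (simp add: shape_eq_shape_of mem_shape_of)
next
  case False
  then show ?thesis using dyck_height_nonneg[OF dyck_E, of x] x length_E by simp
qed

text \<open>A gap of 4 at x would put a 2x2 box of cells into the ribbon.\<close>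
lemma gap_le_2:
  assumes x: "2 \<le> x" "x \<le> 2 * m"
  shows "gap x \<le> 2"
proof (rule ccontr)
  assume "\<not> gap x \<le> 2"
  with even_gap[of x] x have gap4: "hD x + 4 \<le> height E x" by presburger
  define y where "y = hD x"
  have y: "0 \<le> y" "even (y + int x)"
    using height_padded(1)[OF dyck_D] dyck_height_nonneg[OF dyck_D, of x]
      even_height_add[of x "D @ [False, False]"] x length_D y_def by auto
  have left: "height E x - 1 \<le> height E (x - 1)" "hD (x - 1) \<le> y + 1"
    using height_Suc[of "x - 1" E] height_Suc[of "x - 1" "D @ [False, False]"] x y_def length_D length_E
    by (auto split: if_splits)
  have right: "height E x - 1 \<le> height E (x + 1)" "hD (x + 1) \<le> y + 1"
    using height_Suc[of x E] height_Suc[of x "D @ [False, False]"] x y_def length_D length_E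
    by (auto split: if_splits)
  define a where "a = int x - 2"
  have cols: "nat (a + 1) = x - 1" "nat (a + 1 + 1) = x" "nat (a + 2 + 1) = x + 1"
    using x a_def by auto
  have "(a, y + 2) \<in> shape E - shape D"
    unfolding mem_shape_diff cols using x y left gap4 y_def a_def by auto
  moreover have "(a + 1, y + 2 + 1) \<in> shape E - shape D" "(a + 1, y + 2 - 1) \<in> shape E - shape D"
    unfolding mem_shape_diff cols using x y gap4 y_def a_def by auto
  moreover have "(a + 2, y + 2) \<in> shape E - shape D"
    unfolding mem_shape_diff cols using x y right gap4 y_def a_def by auto
  ultimately show False
    using D_covered_E unfolding covered_def ribbon_def by blast
qed

lemma gap_cases:
  assumes "1 \<le> x" "x \<le> 2 * m + 2"
  shows "gap x = 0 \<or> gap x = 2"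
proof -
  consider "x = 1" | "2 \<le> x \<and> x \<le> 2 * m" | "x = 2 * m + 1" | "x = 2 * m + 2"
    using assms by linarith
  then show ?thesis
  proof cases
    case 2
    then have "even (gap x)" "0 \<le> gap x" "gap x \<le> 2"
      using even_gap[of x] gap_le_2[of x] hD_le_height[of x] by auto
    then show ?thesis by presburger
  qed (use gap_1 gap_end in auto)
qed

lemma gap_2_imp_cell:
  assumes "1 \<le> x" "x \<le> 2 * m + 1" "gap x = 2"
  shows "(int x - 1, hD x + 1) \<in> shape E - shape D"
proof -
  have "nat (int x - 1 + 1) = x" using assms by simp
  moreover have "-1 \<le> hD x" using height_padded_ge[OF dyck_D, of x] assms length_D by simp
  moreover have "even (hD x + int x)" using even_height_add[of x "D @ [False, False]"] assms length_D by simp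
  ultimately show ?thesis unfolding mem_shape_diff using assms by auto
qed

lemma gap_0_imp_no_cell:
  assumes "1 \<le> x" "gap x = 0"
  shows "(int x - 1, b) \<notin> shape E - shape D"
proof -
  have "nat (int x - 1 + 1) = x" using assms by simp
  then show ?thesis unfolding mem_shape_diff using assms by auto
qed

text \<open>Once the gap has opened it cannot close again: otherwise the column where it
  closes would separate two cells of the ribbon.\<close>
lemma gap_stays_2:
  assumes "1 \<le> x" "x < y" "y \<le> 2 * m + 2" "gap x = 2"
  shows "gap y = 2"
proof (rule ccontr)
  assume "gap y \<noteq> 2"
  then have "gap y = 0" using gap_cases[of y] assms by auto
  then have "y \<le> 2 * m + 1" using gap_end(2) assms by (cases "y = 2 * m + 2") auto
  define A where "A = shape E - shape D"
  have "(int x - 1, hD x + 1) \<in> A" "(int (2 * m + 1) - 1, hD (2 * m + 1) + 1) \<in> A"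
    using gap_2_imp_cell[of x] gap_2_imp_cell[of "2 * m + 1"] gap_end(1) assms \<open>y \<le> 2 * m + 1\<close>
    unfolding A_def by auto
  then have "(\<lambda>u v. u \<in> A \<and> v \<in> A \<and> adj u v)\<^sup>*\<^sup>*
      (int x - 1, hD x + 1) (int (2 * m + 1) - 1, hD (2 * m + 1) + 1)"
    using D_covered_E unfolding covered_def ribbon_def A_def by blast
  from adj_path_stays_left[OF this, of "int y - 1"] show False
    using gap_0_imp_no_cell[of y] \<open>gap y = 0\<close> \<open>y \<le> 2 * m + 1\<close> assms unfolding A_def by auto
qed

lemma covered_imp_grow:
  "\<exists>c. 1 \<le> c \<and> c \<le> 2 * m \<and> \<not> (D @ [False, False]) ! c \<and> E = grow D c"
proof -
  define c where "c = (LEAST x. gap (Suc x) = 2)"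
  have "gap (Suc c) = 2" "c \<le> 2 * m"
    using LeastI[of "\<lambda>x. gap (Suc x) = 2"] Least_le[of "\<lambda>x. gap (Suc x) = 2"] gap_end(1)
    unfolding c_def by auto
  have below: "gap x = 0" if "x \<le> c" for x
  proof (cases x)
    case (Suc x')
    then have "gap x \<noteq> 2" using not_less_Least[of x' "\<lambda>x. gap (Suc x) = 2"] that c_def by auto
    then show ?thesis using gap_cases[of x] Suc that \<open>c \<le> 2 * m\<close> by auto
  qed simp
  have above: "gap x = 2" if "c < x" "x \<le> 2 * m + 2" for x
    using gap_stays_2[of "Suc c" x] \<open>gap (Suc c) = 2\<close> that by (cases "x = Suc c") auto
  have "1 \<le> c" using below[of 1] gap_1 \<open>gap (Suc c) = 2\<close> by (cases c) auto
  moreover have "\<not> (D @ [False, False]) ! c \<and> E = grow D c"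
  proof (rule list_update_True_if_height)
    show "length E = length (D @ [False, False])" "c < length (D @ [False, False])"
      using length_D length_E \<open>c \<le> 2 * m\<close> by auto
    show "height E x = hD x + (if c < x then 2 else 0)" if "x \<le> length (D @ [False, False])" for x
      using below[of x] above[of x] that length_D by (cases "c < x") auto
  qed
  ultimately show ?thesis using \<open>c \<le> 2 * m\<close> by blast
qed

end

lemma list_update_True_inj:
  assumes "c < length P" "\<not> P ! c" "P[c := True] = P[c' := True]"
  shows "c = c'"
proof (rule ccontr)
  assume "c \<noteq> c'"
  then have "P[c' := True] ! c = P ! c" by simp
  then show False using assms by (metis nth_list_update_eq)
qed

lemma length_dword [simp]: "length (dword i R) = 2 * i + 2"
  by (simp add: dword_def)

lemma nth_dword:
  assumes "j < 2 * i + 2"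
  shows "dword i R ! j \<longleftrightarrow> j = 0 \<or> (j \<le> 2 * i \<and> (\<exists>k. (k, j) \<in> R))"
proof (cases j)
  case (Suc j')
  then consider "j' < 2 * i" | "j' = 2 * i" using assms by linarith
  then show ?thesis by cases (simp_all add: dword_def nth_append Suc del: upt_Suc)
qed (simp add: dword_def)

lemma nth_padded_dword:
  assumes "j < 2 * i + 4"
  shows "(dword i R @ [False, False]) ! j \<longleftrightarrow> j = 0 \<or> (j \<le> 2 * i \<and> (\<exists>k. (k, j) \<in> R))"
  using assms nth_dword[of j i R] by (cases "j < 2 * i + 2") (auto simp: nth_append nth_Cons')

lemma mem_top_rows [simp]: "(k, c) \<in> top_rows i R \<longleftrightarrow> (k, c) \<in> R \<and> k \<le> i"
  by (simp add: top_rows_def)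

lemma dword_0: "dword 0 R = [True, False]"
  by (simp add: dword_def)

lemma dword_top_rows_Suc:
  assumes col: "\<And>k c. (k, c) \<in> R \<Longrightarrow> c \<le> 2 * k"
    and row: "\<And>c'. (Suc i, c') \<in> R \<longleftrightarrow> c' = c" and c: "1 \<le> c" "c \<le> 2 * i + 2"
  shows "dword (Suc i) (top_rows (Suc i) R) = grow (dword i (top_rows i R)) c"
proof (rule nth_equalityI)
  fix j assume "j < length (dword (Suc i) (top_rows (Suc i) R))"
  then have j: "j < 2 * i + 4" by simp
  have "(\<exists>k. (k, j) \<in> R \<and> k \<le> Suc i) \<longleftrightarrow> j = c \<or> (\<exists>k. (k, j) \<in> R \<and> k \<le> i)"
    using row[of j] le_Suc_eq by blast
  moreover have "(k, j) \<in> R \<Longrightarrow> k \<le> i \<Longrightarrow> j \<le> 2 * i" for k using col[of k j] by simp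
  ultimately show "dword (Suc i) (top_rows (Suc i) R) ! j = grow (dword i (top_rows i R)) c ! j"
    using nth_dword[of j "Suc i" "top_rows (Suc i) R"] nth_padded_dword[of j i "top_rows i R"] j c
    by (auto simp: nth_list_update)
qed simp

lemma rook_cell: "rook N R \<Longrightarrow> (k, c) \<in> R \<Longrightarrow> 1 \<le> k \<and> k \<le> N \<and> 1 \<le> c \<and> c \<le> 2 * k"
  unfolding rook_def cells_def by auto

lemma rook_row: "rook N R \<Longrightarrow> 1 \<le> k \<Longrightarrow> k \<le> N \<Longrightarrow> \<exists>!c. (k, c) \<in> R"
  unfolding rook_def by auto

lemma rook_column: "rook N R \<Longrightarrow> (k, c) \<in> R \<Longrightarrow> (k', c) \<in> R \<Longrightarrow> k = k'"
  unfolding rook_def by auto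

lemma rook_top_rows: "rook N R \<Longrightarrow> i \<le> N \<Longrightarrow> rook i (top_rows i R)"
  unfolding rook_def cells_def top_rows_def by auto

lemma rook_dword_Suc:
  assumes R: "rook N R" and i: "Suc i \<le> N" and c: "(Suc i, c) \<in> R"
  shows "1 \<le> c" "c \<le> 2 * i + 2" "\<not> (dword i (top_rows i R) @ [False, False]) ! c"
    and "dword (Suc i) (top_rows (Suc i) R) = grow (dword i (top_rows i R)) c"
proof -
  show c_range: "1 \<le> c" "c \<le> 2 * i + 2" using rook_cell[OF R c] by auto
  show "\<not> (dword i (top_rows i R) @ [False, False]) ! c"
    using nth_padded_dword[of c i "top_rows i R"] rook_column[OF R c] c_range by fastforce
  show "dword (Suc i) (top_rows (Suc i) R) = grow (dword i (top_rows i R)) c"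
    using dword_top_rows_Suc[of R i c] rook_cell[OF R] rook_row[OF R, of "Suc i"] i c c_range
    by blast
qed

lemma dyck_dword_top_rows: "rook N R \<Longrightarrow> i \<le> N \<Longrightarrow> dyck (dword i (top_rows i R))"
proof (induction i)
  case 0
  then show ?case using dyck_up_down by (simp add: dword_0)
next
  case (Suc i)
  then obtain c where "(Suc i, c) \<in> R" using rook_row[of N R "Suc i"] by auto
  then show ?case using rook_dword_Suc[of N R i c] dyck_grow Suc by simp
qed

lemma covered_dword_top_rows:
  "rook N R \<Longrightarrow> Suc i \<le> N \<Longrightarrow> covered (dword i (top_rows i R)) (dword (Suc i) (top_rows (Suc i) R))"
  using rook_row[of N R "Suc i"] rook_dword_Suc[of N R i] covered_grow dyck_dword_top_rows[of N R i]
  by fastforce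

lemma length_rook_chain [simp]: "length (rook_chain n R) = n"
  by (simp add: rook_chain_def)

lemma nth_rook_chain: "i < n \<Longrightarrow> rook_chain n R ! i = dword i (top_rows i R)"
  by (simp add: rook_chain_def)

lemma dyck_chain_rook_chain: "rook N R \<Longrightarrow> dyck_chain (Suc N) (rook_chain (Suc N) R)"
  unfolding dyck_chain_def
  by (simp add: nth_rook_chain dyck_dword_top_rows covered_dword_top_rows)

lemma rook_subset_if_same_dwords:
  assumes R: "rook N R" and S: "rook N S"
    and eq: "\<And>i. i \<le> N \<Longrightarrow> dword i (top_rows i R) = dword i (top_rows i S)"
  shows "R \<subseteq> S"
proof
  fix p assume "p \<in> R"
  moreover obtain k c where "p = (k, c)" by (cases p)
  ultimately have "1 \<le> k" "k \<le> N" using rook_cell[OF R] by auto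
  then obtain i where "k = Suc i" by (cases k) auto
  with \<open>p \<in> R\<close> \<open>p = (k, c)\<close> \<open>k \<le> N\<close>
  have p: "p = (Suc i, c)" "(Suc i, c) \<in> R" "Suc i \<le> N" by auto
  then obtain c' where c': "(Suc i, c') \<in> S" using rook_row[OF S, of "Suc i"] by auto
  have "c = c'"
  proof (rule list_update_True_inj)
    show "c < length (dword i (top_rows i R) @ [False, False])" "\<not> (dword i (top_rows i R) @ [False, False]) ! c"
      using rook_dword_Suc[OF R p(3,2)] by auto
    show "grow (dword i (top_rows i R)) c = grow (dword i (top_rows i R)) c'"
      using rook_dword_Suc(4)[OF R p(3,2)] rook_dword_Suc(4)[OF S p(3) c'] eq[of i] eq[of "Suc i"] p(3)
      by simp
  qed
  then show "p \<in> S" using p c' by simp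
qed

lemma inj_on_rook_chain: "inj_on (rook_chain (Suc N)) {R. rook N R}"
proof (rule inj_onI)
  fix R S assume R: "R \<in> {R. rook N R}" and S: "S \<in> {R. rook N R}"
    and eq: "rook_chain (Suc N) R = rook_chain (Suc N) S"
  have "dword i (top_rows i R) = dword i (top_rows i S)" if "i \<le> N" for i
    using nth_rook_chain[of i "Suc N" R] nth_rook_chain[of i "Suc N" S] eq that by simp
  then show "R = S"
    using rook_subset_if_same_dwords[of N R S] rook_subset_if_same_dwords[of N S R] R S by auto
qed

lemma dword_top_rows_graph:
  fixes col :: "nat \<Rightarrow> nat" and N :: nat
  defines "R \<equiv> {(Suc i, col i) | i. i < N}"
  assumes col: "\<And>i. i < N \<Longrightarrow> 1 \<le> col i \<and> col i \<le> 2 * Suc i" and "i < N"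
  shows "dword (Suc i) (top_rows (Suc i) R) = grow (dword i (top_rows i R)) (col i)"
proof (rule dword_top_rows_Suc)
  show "c \<le> 2 * k" if "(k, c) \<in> R" for k c using that col unfolding R_def by fastforce
qed (use assms in auto)

lemma rook_graph:
  fixes col :: "nat \<Rightarrow> nat" and N :: nat
  defines "R \<equiv> {(Suc i, col i) | i. i < N}"
  assumes col: "\<And>i. i < N \<Longrightarrow> 1 \<le> col i \<and> col i \<le> 2 * Suc i"
    and fresh: "\<And>i. i < N \<Longrightarrow> \<not> (dword i (top_rows i R) @ [False, False]) ! col i"
  shows "rook N R"
  unfolding rook_def
proof (intro conjI ballI allI impI)
  show "R \<subseteq> cells N" using col unfolding R_def cells_def by auto
  show "\<exists>!c. (k, c) \<in> R" if "k \<in> {1..N}" for k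
    using that unfolding R_def by (cases k) auto
  have "col a \<noteq> col b" if "a < b" "b < N" for a b
  proof
    assume "col a = col b"
    have "(Suc a, col a) \<in> top_rows b R" "col a \<le> 2 * b"
      using col[of a] that unfolding R_def by auto
    then have "(dword b (top_rows b R) @ [False, False]) ! col b"
      using nth_padded_dword[of "col a" b "top_rows b R"] \<open>col a = col b\<close> by auto
    then show False using fresh[of b] that by simp
  qed
  then show "k = k'" if "(k, c) \<in> R" "(k', c) \<in> R" for k k' c
    using that unfolding R_def by (auto, metis linorder_neqE_nat)
qed

lemma rook_chain_surj:
  assumes Ds: "dyck_chain (Suc N) Ds"
  shows "\<exists>R. rook N R \<and> rook_chain (Suc N) R = Ds"
proof -
  define fits where "fits i c \<longleftrightarrow> 1 \<le> c \<and> c \<le> 2 * Suc i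
      \<and> \<not> (Ds ! i @ [False, False]) ! c \<and> Ds ! Suc i = grow (Ds ! i) c" for i c
  have "\<forall>i \<in> {..<N}. \<exists>c. fits i c"
    unfolding fits_def
  proof (intro ballI covered_imp_grow)
    fix i assume "i \<in> {..<N}"
    then show "dyck (Ds ! i)" "length (Ds ! i) = 2 * Suc i" "dyck (Ds ! Suc i)"
      "length (Ds ! Suc i) = 2 * Suc i + 2" "covered (Ds ! i) (Ds ! Suc i)"
      using Ds unfolding dyck_chain_def by auto
  qed simp
  then obtain col where "\<forall>i \<in> {..<N}. fits i (col i)" using bchoice by blast
  then have col: "\<And>i. i < N \<Longrightarrow> 1 \<le> col i \<and> col i \<le> 2 * Suc i
      \<and> \<not> (Ds ! i @ [False, False]) ! col i \<and> Ds ! Suc i = grow (Ds ! i) (col i)"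
    unfolding fits_def by simp
  then have bounds: "\<And>i. i < N \<Longrightarrow> 1 \<le> col i \<and> col i \<le> 2 * Suc i" by simp
  define R where "R = {(Suc i, col i) | i. i < N}"
  have dwords: "dword i (top_rows i R) = Ds ! i" if "i \<le> N" for i
    using that
  proof (induction i)
    case 0
    then show ?case using Ds dyck_length_2[of "Ds ! 0"] by (simp add: dword_0 dyck_chain_def)
  next
    case (Suc i)
    then show ?case using dword_top_rows_graph[of N col i, OF bounds] col[of i] unfolding R_def by simp
  qed
  have "rook N R"
    using rook_graph[of N col, OF bounds] col dwords unfolding R_def by simp
  moreover have "rook_chain (Suc N) R = Ds"
  proof (rule nth_equalityI)
    show "length (rook_chain (Suc N) R) = length Ds" using Ds by (simp add: dyck_chain_def)
    show "rook_chain (Suc N) R ! i = Ds ! i" if "i < length (rook_chain (Suc N) R)" for i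
      using that dwords[of i] by (simp add: nth_rook_chain)
  qed
  ultimately show ?thesis by blast
qed

theorem mainTheorem3:
  fixes n :: nat
  assumes "n \<ge> 1"
  shows "(\<forall>R. rook (n - 1) R \<longrightarrow>
            (\<forall>i < n. rook i (top_rows i R)) \<and> dyck_chain n (rook_chain n R))
         \<and> bij_betw (rook_chain n) {R. rook (n - 1) R} {Ds. dyck_chain n Ds}"
proof -
  obtain N where n: "n = Suc N" using assms by (cases n) auto
  have chain: "\<forall>R. rook N R \<longrightarrow> (\<forall>i < n. rook i (top_rows i R)) \<and> dyck_chain n (rook_chain n R)"
    using rook_top_rows dyck_chain_rook_chain n by auto
  moreover have "rook_chain n ` {R. rook N R} = {Ds. dyck_chain n Ds}"
    using chain rook_chain_surj n by blast
  ultimately show ?thesis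
    using inj_on_rook_chain[of N] n by (simp add: bij_betw_def)
qed

end
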